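(* Let $\mathcal{E}=(\mathbf{R},\mathbf{S},\Sigma_{st},\mathbf{F})$ be a constructive relational to RDF data exchange setting. For any instance $I$ of $\mathbf{R}$, if the core pre-solution for $I$ to $\mathcal{E}$ is not node kind consistent, then $I$ does not admit a solution to $\mathcal{E}$.
   Context: Values: $\mathsf{Iri}$ (IRIs, containing predicates $\mathsf{Pred}$), $\mathsf{NullIri}$, $\mathsf{Lit}$ with null literals $\mathsf{NullLit}\subseteq\mathsf{Lit}$; non-null values are constants. $\mathbf{R}=(\mathcal{R},\Sigma_{fd})$: relation names with arities and functional dependencies; an instance assigns finite sets of tuples of non-null literals to relation names. A typed graph: finite set of facts $\mathit{Triple}(s,p,o)$ ($s\in\mathsf{Iri}\cup\mathsf{NullIri}$, $p\in\mathsf{Pred}$, $o\in\mathsf{Iri}\cup\mathsf{NullIri}\cup\mathsf{Lit}$) plus type facts $T(n)$ ($T\in\mathcal{T}$) and $\mathit{Literal}(n)$; literal nodes may only have type $\mathit{Literal}$, non-literal nodes only types in $\mathcal{T}$; $\mathit{types}_G(n)=\{T\mid T(n)\in G\}$. Deterministic shape schema $\mathbf{S}=(\mathcal{T},\delta)$, $\delta:\mathcal{T}\times\mathsf{Pred}\rightharpoonup(\mathcal{T}\cup\{\mathit{Literal}\})\times\{1,?,*,+\}$, $\delta(T,p)=S^\mu$; satisfaction: for each $\delta(T,p)=S^\mu$, every $p$-successor of a $T$-typed node has type $S$; at most one $p$-successor if $\mu\in\{1,?\}$; at least one if $\mu\in\{1,+\}$. Constructive: IRI constructors $f\in\mathcal{F}$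 interpreted as $f^F:\mathsf{Lit}^n\to\mathsf{Iri}$ (constants) with pairwise disjoint ranges, st-tgds full of the form $\forall\bar x.\,\varphi\Rightarrow\psi$, $\varphi$ conjunction of atoms over $\mathcal{R}$, $\psi$ conjunction of atoms $\mathit{Triple}(t_1,p,t_2)$, $T(t)$, $\mathit{Literal}(t)$ with terms variables or $f(\bar u)$. A solution for $I$: a typed graph satisfying $\mathbf{S}$ such that $I$ together with it satisfies $\Sigma_{st}$. The core pre-solution $J_0$: least set of facts containing the evaluated heads of all st-tgds triggered in $I$ and closed under $T(a),\mathit{Triple}(a,p,b)\in J_0,\ \delta(T,p)=S^\mu\Rightarrow S(b)\in J_0$. $\mathit{CoTypes}(J)$ is the set of all $X\subseteq\mathcal{T}\cup\{\mathit{Literal}\}$ such that every solution $G\supseteq J$ has a node $n$ with $X=\mathit{types}_G(n)$; $J_0$ is node kind consistent if $\mathit{CoTypes}(J_0)$ contains no $X$ with $\{\mathit{Literal},T\}\subseteq X$ for some $T\in\mathcal{T}$. *)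

theory Defs
  imports Main
begin

text \<open>IRIs have type 'i, null IRIs type 'n, literals type 'l.
  The set of predicates is a subset of the IRIs; null literals are a subset of the literals.\<close>
datatype ('i, 'n, 'l) node = IriN 'i | NullIriN 'n | LitN 'l

fun is_lit :: "('i, 'n, 'l) node \<Rightarrow> bool" where
  "is_lit (LitN _) = True"
| "is_lit _ = False"

datatype 't tlabel = Ty 't | LitTy

datatype mult = One | Opt | Star | Plus

text \<open>Facts of a typed graph: Triple(s,p,o), T(n) (= Typ (Ty T) n), Literal(n) (= Typ LitTy n).\<close>
datatype ('i, 'n, 'l, 't) fact =
    Triple "('i, 'n, 'l) node" 'i "('i, 'n, 'l) node"
  | Typ "'t tlabel" "('i, 'n, 'l) node"

datatype ('f, 'v) tm = Var 'v | Fn 'f "'v list"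

datatype ('i, 't, 'f, 'v) hatom =
    HTriple "('f, 'v) tm" 'i "('f, 'v) tm"
  | HType "'t tlabel" "('f, 'v) tm"

text \<open>An st-tgd: body = list of relational atoms R(x), head = list of head atoms.\<close>
type_synonym ('r, 'i, 't, 'f, 'v) tgd = "('r \<times> 'v list) list \<times> ('i, 't, 'f, 'v) hatom list"

record ('r, 'i, 'l, 't, 'f, 'v) setting =
  Rels :: "'r set"
  rarity :: "'r \<Rightarrow> nat"
  fds :: "('r \<times> nat set \<times> nat set) set"   \<comment> \<open>functional dependencies R : A \<rightarrow> B (positions)\<close>
  Pred :: "'i set"
  NullLit :: "'l set"
  Types :: "'t set"
  delta :: "'t \<Rightarrow> 'i \<Rightarrow> ('t tlabel \<times> mult) option"
  tgds :: "('r, 'i, 't, 'f, 'v) tgd set"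
  Fns :: "'f set"
  farity :: "'f \<Rightarrow> nat"
  Fint :: "'f \<Rightarrow> 'l list \<Rightarrow> 'i"

fun term_vars :: "('f, 'v) tm \<Rightarrow> 'v set" where
  "term_vars (Var x) = {x}"
| "term_vars (Fn f us) = set us"

fun hatom_vars :: "('i, 't, 'f, 'v) hatom \<Rightarrow> 'v set" where
  "hatom_vars (HTriple t1 p t2) = term_vars t1 \<union> term_vars t2"
| "hatom_vars (HType X t) = term_vars t"

fun term_ok :: "('r, 'i, 'l, 't, 'f, 'v, 'z) setting_scheme \<Rightarrow> ('f, 'v) tm \<Rightarrow> bool" where
  "term_ok E (Var x) = True"
| "term_ok E (Fn f us) = (f \<in> Fns E \<and> length us = farity E f)"

fun hatom_ok :: "('r, 'i, 'l, 't, 'f, 'v, 'z) setting_scheme \<Rightarrow> ('i, 't, 'f, 'v) hatom \<Rightarrow> bool" where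
  "hatom_ok E (HTriple t1 p t2) = (term_ok E t1 \<and> p \<in> Pred E \<and> term_ok E t2)"
| "hatom_ok E (HType X t) = ((\<forall>T. X = Ty T \<longrightarrow> T \<in> Types E) \<and> term_ok E t)"

fun tlabel_ok :: "'t set \<Rightarrow> 't tlabel \<Rightarrow> bool" where
  "tlabel_ok TT (Ty T) = (T \<in> TT)"
| "tlabel_ok TT LitTy = True"

definition constructive_setting :: "('r, 'i, 'l, 't, 'f, 'v, 'z) setting_scheme \<Rightarrow> bool" where
  "constructive_setting E \<longleftrightarrow>
     finite (Rels E) \<and> finite (Types E) \<and> finite (tgds E) \<and> finite (Fns E)
   \<and> (\<forall>(r, A, B) \<in> fds E. r \<in> Rels E \<and> A \<subseteq> {..<rarity E r} \<and> B \<subseteq> {..<rarity E r})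
   \<and> (\<forall>T p S. delta E T p = Some S \<longrightarrow> T \<in> Types E \<and> p \<in> Pred E \<and> tlabel_ok (Types E) (fst S))
   \<and> (\<forall>f \<in> Fns E. \<forall>g \<in> Fns E. f \<noteq> g \<longrightarrow>
        (Fint E f ` {xs. length xs = farity E f}) \<inter> (Fint E g ` {xs. length xs = farity E g}) = {})
   \<and> (\<forall>(body, head) \<in> tgds E.
        (\<forall>(r, xs) \<in> set body. r \<in> Rels E \<and> length xs = rarity E r)
      \<and> (\<forall>a \<in> set head. hatom_ok E a)
      \<and> (\<forall>a \<in> set head. hatom_vars a \<subseteq> (\<Union>(r, xs) \<in> set body. set xs)))"

definition instance_of :: "('r, 'i, 'l, 't, 'f, 'v, 'z) setting_scheme \<Rightarrow> ('r \<Rightarrow> 'l list set) \<Rightarrow> bool" where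
  "instance_of E I \<longleftrightarrow>
     (\<forall>r. finite (I r))
   \<and> (\<forall>r. r \<notin> Rels E \<longrightarrow> I r = {})
   \<and> (\<forall>r \<in> Rels E. \<forall>t \<in> I r. length t = rarity E r \<and> set t \<inter> NullLit E = {})
   \<and> (\<forall>(r, A, B) \<in> fds E. \<forall>t1 \<in> I r. \<forall>t2 \<in> I r.
        (\<forall>i \<in> A. t1 ! i = t2 ! i) \<longrightarrow> (\<forall>j \<in> B. t1 ! j = t2 ! j))"

definition types_of :: "('i, 'n, 'l, 't) fact set \<Rightarrow> ('i, 'n, 'l) node \<Rightarrow> 't tlabel set" where
  "types_of G n = {X. Typ X n \<in> G}"

definition nodes :: "('i, 'n, 'l, 't) fact set \<Rightarrow> ('i, 'n, 'l) node set" where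
  "nodes G = {n. (\<exists>p o'. Triple n p o' \<in> G) \<or> (\<exists>s p. Triple s p n \<in> G) \<or> (\<exists>X. Typ X n \<in> G)}"

definition typed_graph :: "('r, 'i, 'l, 't, 'f, 'v, 'z) setting_scheme \<Rightarrow> ('i, 'n, 'l, 't) fact set \<Rightarrow> bool" where
  "typed_graph E G \<longleftrightarrow>
     finite G
   \<and> (\<forall>s p o'. Triple s p o' \<in> G \<longrightarrow> \<not> is_lit s \<and> p \<in> Pred E)
   \<and> (\<forall>n. Typ LitTy n \<in> G \<longrightarrow> is_lit n)
   \<and> (\<forall>T n. Typ (Ty T) n \<in> G \<longrightarrow> \<not> is_lit n \<and> T \<in> Types E)"

definition satisfies_shapes :: "('r, 'i, 'l, 't, 'f, 'v, 'z) setting_scheme \<Rightarrow> ('i, 'n, 'l, 't) fact set \<Rightarrow> bool" where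
  "satisfies_shapes E G \<longleftrightarrow>
     (\<forall>T p S \<mu> n. delta E T p = Some (S, \<mu>) \<and> Typ (Ty T) n \<in> G \<longrightarrow>
        (\<forall>m. Triple n p m \<in> G \<longrightarrow> Typ S m \<in> G)
      \<and> (\<mu> \<in> {One, Opt} \<longrightarrow> (\<forall>m1 m2. Triple n p m1 \<in> G \<and> Triple n p m2 \<in> G \<longrightarrow> m1 = m2))
      \<and> (\<mu> \<in> {One, Plus} \<longrightarrow> (\<exists>m. Triple n p m \<in> G)))"

fun eval_term :: "('r, 'i, 'l, 't, 'f, 'v, 'z) setting_scheme \<Rightarrow> ('v \<Rightarrow> 'l) \<Rightarrow> ('f, 'v) tm \<Rightarrow> ('i, 'n, 'l) node" where
  "eval_term E \<nu> (Var x) = LitN (\<nu> x)"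
| "eval_term E \<nu> (Fn f us) = IriN (Fint E f (map \<nu> us))"

fun eval_hatom :: "('r, 'i, 'l, 't, 'f, 'v, 'z) setting_scheme \<Rightarrow> ('v \<Rightarrow> 'l) \<Rightarrow> ('i, 't, 'f, 'v) hatom \<Rightarrow> ('i, 'n, 'l, 't) fact" where
  "eval_hatom E \<nu> (HTriple t1 p t2) = Triple (eval_term E \<nu> t1) p (eval_term E \<nu> t2)"
| "eval_hatom E \<nu> (HType X t) = Typ X (eval_term E \<nu> t)"

definition triggers :: "('r \<Rightarrow> 'l list set) \<Rightarrow> ('r \<times> 'v list) list \<Rightarrow> ('v \<Rightarrow> 'l) \<Rightarrow> bool" where
  "triggers I body \<nu> \<longleftrightarrow> (\<forall>(r, xs) \<in> set body. map \<nu> xs \<in> I r)"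

definition satisfies_tgds :: "('r, 'i, 'l, 't, 'f, 'v, 'z) setting_scheme \<Rightarrow> ('r \<Rightarrow> 'l list set) \<Rightarrow> ('i, 'n, 'l, 't) fact set \<Rightarrow> bool" where
  "satisfies_tgds E I G \<longleftrightarrow>
     (\<forall>(body, head) \<in> tgds E. \<forall>\<nu>. triggers I body \<nu> \<longrightarrow> (\<forall>a \<in> set head. eval_hatom E \<nu> a \<in> G))"

definition solution :: "('r, 'i, 'l, 't, 'f, 'v, 'z) setting_scheme \<Rightarrow> ('r \<Rightarrow> 'l list set) \<Rightarrow> ('i, 'n, 'l, 't) fact set \<Rightarrow> bool" where
  "solution E I G \<longleftrightarrow> typed_graph E G \<and> satisfies_shapes E G \<and> satisfies_tgds E I G"

inductive_set core_pre_solution :: "('r, 'i, 'l, 't, 'f, 'v, 'z) setting_scheme \<Rightarrow> ('r \<Rightarrow> 'l list set) \<Rightarrow> ('i, 'n, 'l, 't) fact set"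
  for E I where
  head: "\<lbrakk>(body, hs) \<in> tgds E; triggers I body \<nu>; a \<in> set hs\<rbrakk> \<Longrightarrow> eval_hatom E \<nu> a \<in> core_pre_solution E I"
| close: "\<lbrakk>Typ (Ty T) a \<in> core_pre_solution E I; Triple a p b \<in> core_pre_solution E I;
            delta E T p = Some (S, \<mu>)\<rbrakk> \<Longrightarrow> Typ S b \<in> core_pre_solution E I"

definition CoTypes :: "('r, 'i, 'l, 't, 'f, 'v, 'z) setting_scheme \<Rightarrow> ('r \<Rightarrow> 'l list set) \<Rightarrow> ('i, 'n, 'l, 't) fact set \<Rightarrow> 't tlabel set set" where
  "CoTypes E I J = {X. X \<subseteq> Ty ` Types E \<union> {LitTy} \<and>
      (\<forall>G. solution E I G \<and> J \<subseteq> G \<longrightarrow> (\<exists>n \<in> nodes G. X = types_of G n))}"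

definition node_kind_consistent :: "('r, 'i, 'l, 't, 'f, 'v, 'z) setting_scheme \<Rightarrow> ('r \<Rightarrow> 'l list set) \<Rightarrow> ('i, 'n, 'l, 't) fact set \<Rightarrow> bool" where
  "node_kind_consistent E I J \<longleftrightarrow>
     \<not> (\<exists>X \<in> CoTypes E I J. \<exists>T \<in> Types E. {LitTy, Ty T} \<subseteq> X)"

end

theory Submission
  imports Defs
begin

text \<open>Every solution contains the core pre-solution, since its defining closure rules are exactly
  requirements that a solution satisfies. Hence a set of co-types of the core pre-solution is
  realised by some node of any solution, and no node of a typed graph can be typed both as a
  literal and with a shape type.\<close>

lemma typed_graph_lit_not_shape_typed:
  assumes "typed_graph E G" and "LitTy \<in> types_of G n"
  shows "Ty T \<notin> types_of G n"
  using assms unfolding typed_graph_def types_of_def by blast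

lemma core_pre_solution_subset_solution:
  fixes G :: "('i, 'n, 'l, 't) fact set"
  assumes "solution E I G"
  shows "core_pre_solution E I \<subseteq> G"
proof
  fix x :: "('i, 'n, 'l, 't) fact"
  assume "x \<in> core_pre_solution E I"
  then show "x \<in> G"
  proof induction
    case (head body hs \<nu> a)
    then show ?case using assms unfolding solution_def satisfies_tgds_def by fastforce
  next
    case (close T a p b S \<mu>)
    then show ?case using assms unfolding solution_def satisfies_shapes_def by blast
  qed
qed

lemma solution_imp_node_kind_consistent:
  assumes "solution E I G" and "J \<subseteq> G"
  shows "node_kind_consistent E I J"
  unfolding node_kind_consistent_def
proof (intro notI, elim bexE)
  fix X T
  assume "X \<in> CoTypes E I J" and "T \<in> Types E" and "{LitTy, Ty T} \<subseteq> X"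
  then obtain n where "X = types_of G n"
    using assms unfolding CoTypes_def by blast
  with \<open>{LitTy, Ty T} \<subseteq> X\<close> have "LitTy \<in> types_of G n" and "Ty T \<in> types_of G n"
    by auto
  moreover have "typed_graph E G"
    using assms(1) unfolding solution_def by simp
  ultimately show False
    by (simp add: typed_graph_lit_not_shape_typed)
qed

theorem lemma2:
  fixes E :: "('r, 'i, 'l, 't, 'f, 'v) setting"
    and I :: "'r \<Rightarrow> 'l list set"
  assumes "constructive_setting E"
    and "instance_of E I"
    and "\<not> node_kind_consistent E I (core_pre_solution E I :: ('i, 'n, 'l, 't) fact set)"
  shows "\<not> (\<exists>G :: ('i, 'n, 'l, 't) fact set. solution E I G)"
proof
  assume "\<exists>G :: ('i, 'n, 'l, 't) fact set. solution E I G"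
  then obtain G :: "('i, 'n, 'l, 't) fact set" where "solution E I G" ..
  then have "node_kind_consistent E I (core_pre_solution E I :: ('i, 'n, 'l, 't) fact set)"
    using solution_imp_node_kind_consistent core_pre_solution_subset_solution by blast
  with assms(3) show False ..
qed

end
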